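(* Let $R$ be a unital ring, $e\in R$ an idempotent and $\alpha:R\to eRe$ a ring isomorphism. If $e$ is a full idempotent, i.e. $ReR=R$, then the corner skew Laurent polynomial ring $R[t_+,t_-;\alpha]$ is strongly $\mathbb{Z}$-graded.
   Context: $R[t_+,t_-;\alpha]$ is the universal unital ring equipped with a unital ring homomorphism $i:R\to R[t_+,t_-;\alpha]$ and elements $t_+,t_-$ satisfying $t_-t_+=1$, $t_+t_-=i(e)$, $i(r)t_-=t_-i(\alpha(r))$ and $t_+i(r)=i(\alpha(r))t_+$ for all $r\in R$. It is $\mathbb{Z}$-graded by $A_0=i(R)$, $A_i=Rt_+^{-i}$ for $i<0$ and $A_i=t_-^iR$ for $i>0$ (so $t_-\in A_1$, $t_+\in A_{-1}$). A $\mathbb{Z}$-graded ring is strongly graded if $A_mA_n=A_{m+n}$ for all $m,n$. *)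

theory Defs
  imports "HOL-Algebra.Algebra"
begin

definition corner :: "('a, 'm) ring_scheme \<Rightarrow> 'a \<Rightarrow> ('a, 'm) ring_scheme" where
  "corner R e = R\<lparr>carrier := {e \<otimes>\<^bsub>R\<^esub> r \<otimes>\<^bsub>R\<^esub> e | r. r \<in> carrier R}, one := e\<rparr>"

definition add_span :: "('a, 'm) ring_scheme \<Rightarrow> 'a set \<Rightarrow> 'a set" where
  "add_span R S = \<Inter>{H. additive_subgroup H R \<and> S \<subseteq> H}"

definition set_prod :: "('a, 'm) ring_scheme \<Rightarrow> 'a set \<Rightarrow> 'a set \<Rightarrow> 'a set" where
  "set_prod R S T = add_span R {x \<otimes>\<^bsub>R\<^esub> y | x y. x \<in> S \<and> y \<in> T}"

definition idempotent_elem :: "('a, 'm) ring_scheme \<Rightarrow> 'a \<Rightarrow> bool" where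
  "idempotent_elem R e \<longleftrightarrow> e \<in> carrier R \<and> e \<otimes>\<^bsub>R\<^esub> e = e"

definition full_idempotent :: "('a, 'm) ring_scheme \<Rightarrow> 'a \<Rightarrow> bool" where
  "full_idempotent R e \<longleftrightarrow> idempotent_elem R e \<and>
     set_prod R (set_prod R (carrier R) {e}) (carrier R) = carrier R"

text \<open>The defining relations of the corner skew Laurent polynomial ring, in a ring B
  with a unital ring homomorphism j : R -> B and elements sp (= t_+), sm (= t_-).\<close>
definition corner_skew_rels ::
  "('a, 'm) ring_scheme \<Rightarrow> 'a \<Rightarrow> ('a \<Rightarrow> 'a) \<Rightarrow> ('b, 'n) ring_scheme \<Rightarrow> ('a \<Rightarrow> 'b) \<Rightarrow> 'b \<Rightarrow> 'b \<Rightarrow> bool" where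
  "corner_skew_rels R e \<alpha> B j sp sm \<longleftrightarrow>
     ring B \<and> j \<in> ring_hom R B \<and> sp \<in> carrier B \<and> sm \<in> carrier B \<and>
     sm \<otimes>\<^bsub>B\<^esub> sp = \<one>\<^bsub>B\<^esub> \<and> sp \<otimes>\<^bsub>B\<^esub> sm = j e \<and>
     (\<forall>r\<in>carrier R. j r \<otimes>\<^bsub>B\<^esub> sm = sm \<otimes>\<^bsub>B\<^esub> j (\<alpha> r)) \<and>
     (\<forall>r\<in>carrier R. sp \<otimes>\<^bsub>B\<^esub> j r = j (\<alpha> r) \<otimes>\<^bsub>B\<^esub> sp)"

text \<open>(A, i, tp, tm) is the universal such ring R[t_+,t_-;alpha] (universality tested
  against all rings whose elements live in the same type as those of A).\<close>
definition is_corner_skew_Laurent ::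
  "('a, 'm) ring_scheme \<Rightarrow> 'a \<Rightarrow> ('a \<Rightarrow> 'a) \<Rightarrow> 'b ring \<Rightarrow> ('a \<Rightarrow> 'b) \<Rightarrow> 'b \<Rightarrow> 'b \<Rightarrow> bool" where
  "is_corner_skew_Laurent R e \<alpha> A i tp tm \<longleftrightarrow>
     corner_skew_rels R e \<alpha> A i tp tm \<and>
     (\<forall>(B::'b ring) j sp sm. corner_skew_rels R e \<alpha> B j sp sm \<longrightarrow>
        (\<exists>\<phi>\<in>ring_hom A B. (\<forall>r\<in>carrier R. \<phi> (i r) = j r) \<and> \<phi> tp = sp \<and> \<phi> tm = sm \<and>
           (\<forall>\<psi>\<in>ring_hom A B. (\<forall>r\<in>carrier R. \<psi> (i r) = j r) \<and> \<psi> tp = sp \<and> \<psi> tm = sm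
               \<longrightarrow> (\<forall>x\<in>carrier A. \<psi> x = \<phi> x))))"

definition cs_grade ::
  "('a, 'm) ring_scheme \<Rightarrow> 'b ring \<Rightarrow> ('a \<Rightarrow> 'b) \<Rightarrow> 'b \<Rightarrow> 'b \<Rightarrow> int \<Rightarrow> 'b set" where
  "cs_grade R A i tp tm n =
     (if n = 0 then i ` carrier R
      else if n < 0 then {i r \<otimes>\<^bsub>A\<^esub> (tp [^]\<^bsub>A\<^esub> nat (- n)) | r. r \<in> carrier R}
      else {(tm [^]\<^bsub>A\<^esub> nat n) \<otimes>\<^bsub>A\<^esub> i r | r. r \<in> carrier R})"

definition strongly_graded :: "'b ring \<Rightarrow> (int \<Rightarrow> 'b set) \<Rightarrow> bool" where
  "strongly_graded A G \<longleftrightarrow> (\<forall>m n. set_prod A (G m) (G n) = G (m + n))"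

end

theory Submission
  imports Defs
begin

text \<open>The inclusion A_m A_n \<subseteq> A_(m+n) comes from the relations, which move t_- and t_+ past i(R)
  at the cost of applying \<alpha>, together with t_- i(R) t_+ \<subseteq> i(R). For the reverse inclusion it
  suffices that 1 lies in the additive span of A_m A_(-m), since then
  A_(m+n) = 1 A_(m+n) \<subseteq> span(A_m A_(-m) A_(m+n)) \<subseteq> span(A_m A_n). For m = k \<ge> 0 this is
  t_-^k t_+^k = 1. For m = -k the span is an i(R)-bimodule containing t_+^k t_-^k = i(\<alpha>^k(1));
  as \<alpha>(1) = e is full and \<alpha> is multiplicative, every \<alpha>^k(1) generates R as a two-sided ideal,
  and pulling the span back along i gives an ideal containing \<alpha>^k(1), hence 1. Only the defining
  relations of R[t_+,t_-;\<alpha>] are used, not its universal property.\<close>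

lemma (in ring) additive_subgroupI_closed:
  assumes "H \<subseteq> carrier R" "\<zero> \<in> H" "\<And>x y. x \<in> H \<Longrightarrow> y \<in> H \<Longrightarrow> x \<oplus> y \<in> H"
    and "\<And>x. x \<in> H \<Longrightarrow> \<ominus> x \<in> H"
  shows "additive_subgroup H R"
  by (intro additive_subgroupI subgroup.intro) (use assms in \<open>auto simp: a_inv_def[symmetric]\<close>)

lemma add_span_incl: "S \<subseteq> add_span R S"
  unfolding add_span_def by blast

lemma add_span_minimal: "additive_subgroup H R \<Longrightarrow> S \<subseteq> H \<Longrightarrow> add_span R S \<subseteq> H"
  unfolding add_span_def by blast

lemma (in ring) additive_subgroup_add_span:
  assumes "S \<subseteq> carrier R"
  shows "additive_subgroup (add_span R S) R"
proof -
  have "additive_subgroup (carrier R) R"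
    by (rule additive_subgroupI_closed) auto
  then show ?thesis
    unfolding add_span_def using assms
    by (intro additive_subgroupI_closed)
       (auto intro: additive_subgroup.a_closed additive_subgroup.a_inv_closed
          additive_subgroup.zero_closed)
qed

lemma (in ring) add_span_mult_left_closed:
  assumes "S \<subseteq> carrier R" "T \<subseteq> carrier R" "a \<in> carrier R"
    and "\<And>y. y \<in> S \<Longrightarrow> a \<otimes> y \<in> add_span R T" and "y \<in> add_span R S"
  shows "a \<otimes> y \<in> add_span R T"
proof -
  interpret T: additive_subgroup "add_span R T" R
    by (rule additive_subgroup_add_span) fact
  have "additive_subgroup {y \<in> carrier R. a \<otimes> y \<in> add_span R T} R"
    by (rule additive_subgroupI_closed) (auto simp: r_distr r_minus assms(3))
  then show ?thesis
    using add_span_minimal[of _ R S] assms by blast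
qed

lemma (in ring) add_span_mult_right_closed:
  assumes "S \<subseteq> carrier R" "T \<subseteq> carrier R" "a \<in> carrier R"
    and "\<And>y. y \<in> S \<Longrightarrow> y \<otimes> a \<in> add_span R T" and "y \<in> add_span R S"
  shows "y \<otimes> a \<in> add_span R T"
proof -
  interpret T: additive_subgroup "add_span R T" R
    by (rule additive_subgroup_add_span) fact
  have "additive_subgroup {y \<in> carrier R. y \<otimes> a \<in> add_span R T} R"
    by (rule additive_subgroupI_closed) (auto simp: l_distr l_minus assms(3))
  then show ?thesis
    using add_span_minimal[of _ R S] assms by blast
qed

lemma (in ring) full_idempotent_genideal:
  assumes "full_idempotent R e"
  shows "Idl {e} = carrier R"
proof -
  have e: "e \<in> carrier R"
    using assms by (simp add: full_idempotent_def idempotent_elem_def)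
  interpret I: ideal "Idl {e}" R
    using e by (intro genideal_ideal) simp
  have "set_prod R (carrier R) {e} \<subseteq> Idl {e}"
    unfolding set_prod_def
    by (rule add_span_minimal[OF I.is_additive_subgroup]) (use e genideal_self' in \<open>auto intro: I.I_l_closed\<close>)
  then have "set_prod R (set_prod R (carrier R) {e}) (carrier R) \<subseteq> Idl {e}"
    unfolding set_prod_def[of R "set_prod R (carrier R) {e}"]
    by (intro add_span_minimal[OF I.is_additive_subgroup]) (auto intro: I.I_r_closed)
  then show ?thesis
    using assms I.a_subset by (auto simp: full_idempotent_def)
qed

text \<open>The preimage of M is an ideal, so it contains the ideal generated by c, which is all of R.\<close>
lemma (in ring) unit_ideal_generator_image:
  assumes "ring S"
    and closed: "\<And>x. x \<in> carrier R \<Longrightarrow> h x \<in> carrier S"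
    and add: "\<And>x y. x \<in> carrier R \<Longrightarrow> y \<in> carrier R \<Longrightarrow> h (x \<oplus> y) = h x \<oplus>\<^bsub>S\<^esub> h y"
    and mult: "\<And>x y. x \<in> carrier R \<Longrightarrow> y \<in> carrier R \<Longrightarrow> h (x \<otimes> y) = h x \<otimes>\<^bsub>S\<^esub> h y"
    and M: "additive_subgroup M S"
    and M_left: "\<And>x m. x \<in> carrier R \<Longrightarrow> m \<in> M \<Longrightarrow> h x \<otimes>\<^bsub>S\<^esub> m \<in> M"
    and M_right: "\<And>x m. x \<in> carrier R \<Longrightarrow> m \<in> M \<Longrightarrow> m \<otimes>\<^bsub>S\<^esub> h x \<in> M"
    and c: "c \<in> carrier R" "Idl {c} = carrier R" "h c \<in> M"
  shows "h \<one> \<in> M"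
proof -
  interpret S: ring S by fact
  interpret M: additive_subgroup M S by fact
  interpret h: abelian_group_hom R S h
    by (intro abelian_group_homI abelian_group_axioms S.abelian_group_axioms
        group_hom.intro group_hom_axioms.intro homI add.is_group S.add.is_group)
       (simp_all add: closed add)
  have "ideal {x \<in> carrier R. h x \<in> M} R"
  proof (rule idealI[OF ring_axioms])
    show "subgroup {x \<in> carrier R. h x \<in> M} (add_monoid R)"
      by (rule additive_subgroup.a_subgroup, rule additive_subgroupI_closed)
         (auto simp: add)
  qed (auto simp: mult M_left M_right)
  then have "Idl {c} \<subseteq> {x \<in> carrier R. h x \<in> M}"
    using c by (intro genideal_minimal) auto
  then show ?thesis
    using c by auto
qed

lemma (in ring) genideal_unit_image:
  assumes closed: "\<And>x. x \<in> carrier R \<Longrightarrow> h x \<in> carrier R"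
    and add: "\<And>x y. x \<in> carrier R \<Longrightarrow> y \<in> carrier R \<Longrightarrow> h (x \<oplus> y) = h x \<oplus> h y"
    and mult: "\<And>x y. x \<in> carrier R \<Longrightarrow> y \<in> carrier R \<Longrightarrow> h (x \<otimes> y) = h x \<otimes> h y"
    and one: "Idl {h \<one>} = carrier R"
    and c: "c \<in> carrier R" "Idl {c} = carrier R"
  shows "Idl {h c} = carrier R"
proof -
  interpret I: ideal "Idl {h c}" R
    using c closed by (intro genideal_ideal) simp
  have "h \<one> \<in> Idl {h c}"
    using c closed genideal_self'[of "h c"]
    by (intro unit_ideal_generator_image[where h = h, OF ring_axioms closed add mult I.is_additive_subgroup])
       (simp_all add: I.I_l_closed I.I_r_closed)
  then have "Idl {h \<one>} \<subseteq> Idl {h c}"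
    using c closed by (simp add: Idl_subset_ideal')
  then show ?thesis
    using one I.a_subset by blast
qed

locale corner_skew_Laurent = R: ring R + A: ring A
  for R :: "'a ring" and A :: "'b ring" +
  fixes e :: 'a and \<alpha> :: "'a \<Rightarrow> 'a" and i :: "'a \<Rightarrow> 'b" and tp tm :: 'b
  assumes idempotent: "idempotent_elem R e"
    and alpha_iso: "\<alpha> \<in> ring_iso R (corner R e)"
    and relations: "corner_skew_rels R e \<alpha> A i tp tm"
begin

sublocale i: ring_hom_ring R A i
  using relations by (intro ring_hom_ringI2) (simp_all add: corner_skew_rels_def R.ring_axioms)

lemma e_closed [simp]: "e \<in> carrier R" and e_idem: "e \<otimes>\<^bsub>R\<^esub> e = e"
  using idempotent by (simp_all add: idempotent_elem_def)

lemma tp_closed [simp]: "tp \<in> carrier A" and tm_closed [simp]: "tm \<in> carrier A"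
  and tm_tp: "tm \<otimes>\<^bsub>A\<^esub> tp = \<one>\<^bsub>A\<^esub>" and tp_tm: "tp \<otimes>\<^bsub>A\<^esub> tm = i e"
  and i_tm: "r \<in> carrier R \<Longrightarrow> i r \<otimes>\<^bsub>A\<^esub> tm = tm \<otimes>\<^bsub>A\<^esub> i (\<alpha> r)"
  and tp_i: "r \<in> carrier R \<Longrightarrow> tp \<otimes>\<^bsub>A\<^esub> i r = i (\<alpha> r) \<otimes>\<^bsub>A\<^esub> tp"
  using relations by (simp_all add: corner_skew_rels_def)

lemma alpha_corner: "r \<in> carrier R \<Longrightarrow> \<exists>s\<in>carrier R. \<alpha> r = e \<otimes>\<^bsub>R\<^esub> s \<otimes>\<^bsub>R\<^esub> e"
  using ring_hom_closed[of \<alpha> R "corner R e"] alpha_iso by (auto simp: ring_iso_def corner_def)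

lemma alpha_closed [simp]: "r \<in> carrier R \<Longrightarrow> \<alpha> r \<in> carrier R"
  using alpha_corner by (metis R.m_closed e_closed)

lemma alpha_mult: "r \<in> carrier R \<Longrightarrow> s \<in> carrier R \<Longrightarrow> \<alpha> (r \<otimes>\<^bsub>R\<^esub> s) = \<alpha> r \<otimes>\<^bsub>R\<^esub> \<alpha> s"
  and alpha_add: "r \<in> carrier R \<Longrightarrow> s \<in> carrier R \<Longrightarrow> \<alpha> (r \<oplus>\<^bsub>R\<^esub> s) = \<alpha> r \<oplus>\<^bsub>R\<^esub> \<alpha> s"
  and alpha_one: "\<alpha> \<one>\<^bsub>R\<^esub> = e"
  using alpha_iso by (simp_all add: ring_iso_def ring_hom_def corner_def)

lemma alpha_mult_e: "r \<in> carrier R \<Longrightarrow> \<alpha> r \<otimes>\<^bsub>R\<^esub> e = \<alpha> r"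
proof -
  assume "r \<in> carrier R"
  then obtain s where "s \<in> carrier R" "\<alpha> r = e \<otimes>\<^bsub>R\<^esub> s \<otimes>\<^bsub>R\<^esub> e"
    using alpha_corner by blast
  then show ?thesis by (simp add: R.m_assoc e_idem)
qed

lemma corner_in_range: "r \<in> carrier R \<Longrightarrow> \<exists>s\<in>carrier R. \<alpha> s = e \<otimes>\<^bsub>R\<^esub> r \<otimes>\<^bsub>R\<^esub> e"
proof -
  assume "r \<in> carrier R"
  then have "e \<otimes>\<^bsub>R\<^esub> r \<otimes>\<^bsub>R\<^esub> e \<in> \<alpha> ` carrier R"
    using alpha_iso by (auto simp: ring_iso_def bij_betw_def corner_def)
  then show ?thesis by (metis imageE)
qed

lemma alpha_pow_closed [simp]: "r \<in> carrier R \<Longrightarrow> (\<alpha> ^^ k) r \<in> carrier R"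
  by (induction k) auto

lemma tm_i_e: "tm \<otimes>\<^bsub>A\<^esub> i e = tm"
  by (metis tm_tp tp_tm A.m_assoc A.l_one tm_closed tp_closed)

lemma i_e_tp: "i e \<otimes>\<^bsub>A\<^esub> tp = tp"
  by (metis tm_tp tp_tm A.m_assoc A.r_one tm_closed tp_closed)

text \<open>t_- i(r) t_+ = t_- i(e r e) t_+, and e r e = \<alpha> s lies in the image of \<alpha>, so the relation
  i(s) t_- = t_- i(\<alpha> s) turns this into i(s).\<close>
lemma tm_conj_i: "r \<in> carrier R \<Longrightarrow> \<exists>s\<in>carrier R. tm \<otimes>\<^bsub>A\<^esub> i r \<otimes>\<^bsub>A\<^esub> tp = i s"
proof -
  assume r: "r \<in> carrier R"
  then obtain s where s: "s \<in> carrier R" "\<alpha> s = e \<otimes>\<^bsub>R\<^esub> r \<otimes>\<^bsub>R\<^esub> e"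
    using corner_in_range by blast
  have "tm \<otimes>\<^bsub>A\<^esub> i r \<otimes>\<^bsub>A\<^esub> tp = (tm \<otimes>\<^bsub>A\<^esub> i e) \<otimes>\<^bsub>A\<^esub> i r \<otimes>\<^bsub>A\<^esub> (i e \<otimes>\<^bsub>A\<^esub> tp)"
    by (simp add: tm_i_e i_e_tp)
  also have "\<dots> = tm \<otimes>\<^bsub>A\<^esub> i (\<alpha> s) \<otimes>\<^bsub>A\<^esub> tp"
    using r s by (simp add: s(2) A.m_assoc)
  also have "\<dots> = i s"
    using s(1) by (simp add: i_tm[symmetric] A.m_assoc tm_tp)
  finally show ?thesis using s(1) by blast
qed

abbreviation grade :: "int \<Rightarrow> 'b set" where
  "grade \<equiv> cs_grade R A i tp tm"

lemma grade_int: "grade (int k) = {tm [^]\<^bsub>A\<^esub> k \<otimes>\<^bsub>A\<^esub> i r | r. r \<in> carrier R}"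
  by (cases "k = 0") (force simp: cs_grade_def)+

lemma grade_neg_int: "grade (- int k) = {i r \<otimes>\<^bsub>A\<^esub> tp [^]\<^bsub>A\<^esub> k | r. r \<in> carrier R}"
  by (cases "k = 0") (force simp: cs_grade_def)+

lemma tm_pow_i_mem_grade: "r \<in> carrier R \<Longrightarrow> tm [^]\<^bsub>A\<^esub> k \<otimes>\<^bsub>A\<^esub> i r \<in> grade (int k)"
  unfolding grade_int by blast

lemma i_tp_pow_mem_grade: "r \<in> carrier R \<Longrightarrow> i r \<otimes>\<^bsub>A\<^esub> tp [^]\<^bsub>A\<^esub> k \<in> grade (- int k)"
  unfolding grade_neg_int by blast

lemma i_mem_grade_zero: "r \<in> carrier R \<Longrightarrow> i r \<in> grade 0"
  by (simp add: cs_grade_def)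

lemma grade_closed: "x \<in> grade n \<Longrightarrow> x \<in> carrier A"
  by (cases n rule: int_cases2) (auto simp: grade_int grade_neg_int)

lemma tm_mult_grade: "x \<in> grade n \<Longrightarrow> tm \<otimes>\<^bsub>A\<^esub> x \<in> grade (n + 1)"
proof (cases n rule: int_cases)
  case (nonneg k)
  assume "x \<in> grade n"
  then obtain r where r: "r \<in> carrier R" "x = tm [^]\<^bsub>A\<^esub> k \<otimes>\<^bsub>A\<^esub> i r"
    using nonneg by (auto simp: grade_int)
  then have "tm \<otimes>\<^bsub>A\<^esub> x = tm [^]\<^bsub>A\<^esub> Suc k \<otimes>\<^bsub>A\<^esub> i r"
    by (simp add: A.nat_pow_Suc2 A.m_assoc del: nat_pow_Suc A.nat_pow_Suc)
  also have "\<dots> \<in> grade (int (Suc k))"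
    using r(1) by (rule tm_pow_i_mem_grade)
  finally show ?thesis
    using nonneg by (simp add: add.commute)
next
  case (neg k)
  assume "x \<in> grade n"
  then obtain r where r: "r \<in> carrier R" "x = i r \<otimes>\<^bsub>A\<^esub> (tp \<otimes>\<^bsub>A\<^esub> tp [^]\<^bsub>A\<^esub> k)"
    using neg by (auto simp: grade_neg_int A.nat_pow_Suc2 simp del: of_nat_Suc nat_pow_Suc A.nat_pow_Suc)
  obtain s where s: "s \<in> carrier R" "tm \<otimes>\<^bsub>A\<^esub> i r \<otimes>\<^bsub>A\<^esub> tp = i s"
    using tm_conj_i r(1) by blast
  have "tm \<otimes>\<^bsub>A\<^esub> x = i s \<otimes>\<^bsub>A\<^esub> tp [^]\<^bsub>A\<^esub> k"
    using r s by (simp add: A.m_assoc flip: s(2))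
  also have "\<dots> \<in> grade (- int k)"
    using s(1) by (rule i_tp_pow_mem_grade)
  finally show ?thesis
    using neg by simp
qed

lemma i_mult_grade_int:
  "r \<in> carrier R \<Longrightarrow> x \<in> grade (int k) \<Longrightarrow> i r \<otimes>\<^bsub>A\<^esub> x \<in> grade (int k)"
proof (induction k arbitrary: r x)
  case 0
  then show ?case by (auto simp: cs_grade_def simp flip: i.hom_mult)
next
  case (Suc k)
  then obtain s where s: "s \<in> carrier R" "x = tm \<otimes>\<^bsub>A\<^esub> (tm [^]\<^bsub>A\<^esub> k \<otimes>\<^bsub>A\<^esub> i s)"
    by (auto simp: grade_int A.nat_pow_Suc2 A.m_assoc simp del: of_nat_Suc nat_pow_Suc A.nat_pow_Suc)
  have y: "tm [^]\<^bsub>A\<^esub> k \<otimes>\<^bsub>A\<^esub> i s \<in> grade (int k)"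
    using s(1) by (rule tm_pow_i_mem_grade)
  have "i r \<otimes>\<^bsub>A\<^esub> x = tm \<otimes>\<^bsub>A\<^esub> (i (\<alpha> r) \<otimes>\<^bsub>A\<^esub> (tm [^]\<^bsub>A\<^esub> k \<otimes>\<^bsub>A\<^esub> i s))"
  proof -
    have "i r \<otimes>\<^bsub>A\<^esub> x = (i r \<otimes>\<^bsub>A\<^esub> tm) \<otimes>\<^bsub>A\<^esub> (tm [^]\<^bsub>A\<^esub> k \<otimes>\<^bsub>A\<^esub> i s)"
      using Suc.prems(1) s by (simp add: A.m_assoc)
    then show ?thesis
      using Suc.prems(1) s by (simp add: i_tm A.m_assoc)
  qed
  then show ?case
    using tm_mult_grade[OF Suc.IH[OF _ y]] Suc.prems(1) by (simp add: add.commute)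
qed

lemma i_mult_grade: "r \<in> carrier R \<Longrightarrow> x \<in> grade n \<Longrightarrow> i r \<otimes>\<^bsub>A\<^esub> x \<in> grade n"
proof (cases n rule: int_cases2)
  case (nonpos k)
  assume r: "r \<in> carrier R" and "x \<in> grade n"
  then obtain s where s: "s \<in> carrier R" "x = i s \<otimes>\<^bsub>A\<^esub> tp [^]\<^bsub>A\<^esub> k"
    using nonpos by (auto simp: grade_neg_int)
  then have "i r \<otimes>\<^bsub>A\<^esub> x = i (r \<otimes>\<^bsub>R\<^esub> s) \<otimes>\<^bsub>A\<^esub> tp [^]\<^bsub>A\<^esub> k"
    using r by (simp add: A.m_assoc)
  then show ?thesis
    using i_tp_pow_mem_grade[of "r \<otimes>\<^bsub>R\<^esub> s" k] r s(1) nonpos by simp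
qed (simp add: i_mult_grade_int)

lemma tp_mult_grade: "x \<in> grade n \<Longrightarrow> tp \<otimes>\<^bsub>A\<^esub> x \<in> grade (n - 1)"
proof -
  assume x: "x \<in> grade n"
  consider (nonpos) k where "n = - int k" | (pos) k where "n = int (Suc k)"
    by (metis int_cases2 minus_zero not0_implies_Suc of_nat_0)
  then show ?thesis
  proof cases
    case nonpos
    then obtain r where r: "r \<in> carrier R" "x = i r \<otimes>\<^bsub>A\<^esub> tp [^]\<^bsub>A\<^esub> k"
      using x by (auto simp: grade_neg_int)
    then have "tp \<otimes>\<^bsub>A\<^esub> x = (tp \<otimes>\<^bsub>A\<^esub> i r) \<otimes>\<^bsub>A\<^esub> tp [^]\<^bsub>A\<^esub> k"
      by (simp add: A.m_assoc)
    also have "\<dots> = i (\<alpha> r) \<otimes>\<^bsub>A\<^esub> tp [^]\<^bsub>A\<^esub> Suc k"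
      using r(1) by (simp add: tp_i A.nat_pow_Suc2 A.m_assoc del: nat_pow_Suc A.nat_pow_Suc)
    also have "\<dots> \<in> grade (- int (Suc k))"
      using r(1) by (intro i_tp_pow_mem_grade alpha_closed)
    finally have "tp \<otimes>\<^bsub>A\<^esub> x \<in> grade (- int (Suc k))" .
    moreover have "n - 1 = - int (Suc k)"
      using nonpos by simp
    ultimately show ?thesis by (simp only:)
  next
    case pos
    then obtain r where r: "r \<in> carrier R" "x = tm \<otimes>\<^bsub>A\<^esub> (tm [^]\<^bsub>A\<^esub> k \<otimes>\<^bsub>A\<^esub> i r)"
      using x by (auto simp: grade_int A.nat_pow_Suc2 A.m_assoc simp del: of_nat_Suc nat_pow_Suc A.nat_pow_Suc)
    then have "tp \<otimes>\<^bsub>A\<^esub> x = i e \<otimes>\<^bsub>A\<^esub> (tm [^]\<^bsub>A\<^esub> k \<otimes>\<^bsub>A\<^esub> i r)"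
      by (simp add: tp_tm flip: A.m_assoc)
    moreover have "tm [^]\<^bsub>A\<^esub> k \<otimes>\<^bsub>A\<^esub> i r \<in> grade (int k)"
      using r(1) by (rule tm_pow_i_mem_grade)
    ultimately show ?thesis
      using pos i_mult_grade[of e] by simp
  qed
qed

lemma tm_pow_mult_grade: "x \<in> grade n \<Longrightarrow> tm [^]\<^bsub>A\<^esub> k \<otimes>\<^bsub>A\<^esub> x \<in> grade (n + int k)"
proof (induction k)
  case (Suc k)
  have "tm [^]\<^bsub>A\<^esub> Suc k \<otimes>\<^bsub>A\<^esub> x = tm \<otimes>\<^bsub>A\<^esub> (tm [^]\<^bsub>A\<^esub> k \<otimes>\<^bsub>A\<^esub> x)"
    using grade_closed[OF Suc.prems]
    by (simp add: A.nat_pow_Suc2 A.m_assoc del: nat_pow_Suc A.nat_pow_Suc)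
  also have "\<dots> \<in> grade (n + int k + 1)"
    using Suc tm_mult_grade by blast
  finally show ?case
    by (simp add: algebra_simps)
qed (simp add: grade_closed)

lemma tp_pow_mult_grade: "x \<in> grade n \<Longrightarrow> tp [^]\<^bsub>A\<^esub> k \<otimes>\<^bsub>A\<^esub> x \<in> grade (n - int k)"
proof (induction k)
  case (Suc k)
  have "tp [^]\<^bsub>A\<^esub> Suc k \<otimes>\<^bsub>A\<^esub> x = tp \<otimes>\<^bsub>A\<^esub> (tp [^]\<^bsub>A\<^esub> k \<otimes>\<^bsub>A\<^esub> x)"
    using grade_closed[OF Suc.prems]
    by (simp add: A.nat_pow_Suc2 A.m_assoc del: nat_pow_Suc A.nat_pow_Suc)
  also have "\<dots> \<in> grade (n - int k - 1)"
    using Suc tp_mult_grade by blast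
  finally show ?case
    by (simp add: algebra_simps)
qed (simp add: grade_closed)

lemma grade_mult: "x \<in> grade m \<Longrightarrow> y \<in> grade n \<Longrightarrow> x \<otimes>\<^bsub>A\<^esub> y \<in> grade (m + n)"
proof (cases m rule: int_cases2)
  case (nonneg k)
  assume "x \<in> grade m" and y: "y \<in> grade n"
  then obtain r where "r \<in> carrier R" "x = tm [^]\<^bsub>A\<^esub> k \<otimes>\<^bsub>A\<^esub> i r"
    using nonneg by (auto simp: grade_int)
  then show ?thesis
    using tm_pow_mult_grade[OF i_mult_grade, of r y n k] y nonneg grade_closed
    by (simp add: A.m_assoc add.commute)
next
  case (nonpos k)
  assume "x \<in> grade m" and y: "y \<in> grade n"
  then obtain r where "r \<in> carrier R" "x = i r \<otimes>\<^bsub>A\<^esub> tp [^]\<^bsub>A\<^esub> k"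
    using nonpos by (auto simp: grade_neg_int)
  then show ?thesis
    using i_mult_grade[OF _ tp_pow_mult_grade, of r y n k] y nonpos grade_closed
    by (simp add: A.m_assoc)
qed

lemma additive_subgroup_grade: "additive_subgroup (grade n) A"
proof (cases n rule: int_cases2)
  case (nonneg k)
  show ?thesis
  proof (rule A.additive_subgroupI_closed)
    show "\<zero>\<^bsub>A\<^esub> \<in> grade n"
      using nonneg by (auto simp: grade_int intro!: exI[of _ "\<zero>\<^bsub>R\<^esub>"])
  qed (use nonneg in \<open>force simp: grade_int simp flip: A.r_distr A.r_minus i.hom_add i.hom_a_inv\<close>)+
next
  case (nonpos k)
  show ?thesis
  proof (rule A.additive_subgroupI_closed)
    show "\<zero>\<^bsub>A\<^esub> \<in> grade n"
      using nonpos by (auto simp: grade_neg_int intro!: exI[of _ "\<zero>\<^bsub>R\<^esub>"])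
  qed (use nonpos in \<open>force simp: grade_neg_int simp flip: A.l_distr A.l_minus i.hom_add i.hom_a_inv\<close>)+
qed

lemma tm_pow_tp_pow: "tm [^]\<^bsub>A\<^esub> (k::nat) \<otimes>\<^bsub>A\<^esub> tp [^]\<^bsub>A\<^esub> k = \<one>\<^bsub>A\<^esub>"
proof (induction k)
  case (Suc k)
  have "tm [^]\<^bsub>A\<^esub> Suc k \<otimes>\<^bsub>A\<^esub> tp [^]\<^bsub>A\<^esub> Suc k
      = tm [^]\<^bsub>A\<^esub> k \<otimes>\<^bsub>A\<^esub> (tm \<otimes>\<^bsub>A\<^esub> tp) \<otimes>\<^bsub>A\<^esub> tp [^]\<^bsub>A\<^esub> k"
    by (simp only: A.nat_pow_Suc2[OF tp_closed, of k] nat_pow_Suc[where x=tm]) (simp add: A.m_assoc)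
  then show ?case
    using Suc by (simp add: tm_tp)
qed simp

lemma tp_pow_tm_pow: "tp [^]\<^bsub>A\<^esub> (k::nat) \<otimes>\<^bsub>A\<^esub> tm [^]\<^bsub>A\<^esub> k = i ((\<alpha> ^^ k) \<one>\<^bsub>R\<^esub>)"
proof (induction k)
  case (Suc k)
  have "tp [^]\<^bsub>A\<^esub> Suc k \<otimes>\<^bsub>A\<^esub> tm [^]\<^bsub>A\<^esub> Suc k
      = tp \<otimes>\<^bsub>A\<^esub> (tp [^]\<^bsub>A\<^esub> k \<otimes>\<^bsub>A\<^esub> tm [^]\<^bsub>A\<^esub> k) \<otimes>\<^bsub>A\<^esub> tm"
    by (simp only: A.nat_pow_Suc2[OF tp_closed, of k] nat_pow_Suc[where x=tm]) (simp add: A.m_assoc)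
  also have "\<dots> = i (\<alpha> ((\<alpha> ^^ k) \<one>\<^bsub>R\<^esub>)) \<otimes>\<^bsub>A\<^esub> (tp \<otimes>\<^bsub>A\<^esub> tm)"
    by (simp add: Suc tp_i A.m_assoc)
  also have "\<dots> = i ((\<alpha> ^^ Suc k) \<one>\<^bsub>R\<^esub>)"
    by (simp add: tp_tm alpha_mult_e flip: i.hom_mult)
  finally show ?case .
qed simp

lemma genideal_alpha_pow_one:
  assumes "full_idempotent R e"
  shows "genideal R {(\<alpha> ^^ k) \<one>\<^bsub>R\<^esub>} = carrier R"
proof (induction k)
  case (Suc k)
  have "genideal R {\<alpha> \<one>\<^bsub>R\<^esub>} = carrier R"
    using R.full_idempotent_genideal[OF assms] by (simp add: alpha_one)
  then show ?case
    using R.genideal_unit_image[where h = \<alpha>, OF alpha_closed alpha_add alpha_mult] Suc by simp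
qed (simp add: R.genideal_one)

abbreviation grade_products :: "int \<Rightarrow> int \<Rightarrow> 'b set" where
  "grade_products m n \<equiv> {x \<otimes>\<^bsub>A\<^esub> y | x y. x \<in> grade m \<and> y \<in> grade n}"

lemma grade_products_closed: "grade_products m n \<subseteq> carrier A"
  using grade_closed by blast

lemma grade_productsI: "a \<in> grade m \<Longrightarrow> b \<in> grade n \<Longrightarrow> a \<otimes>\<^bsub>A\<^esub> b \<in> grade_products m n"
  by blast

lemma set_prod_subset_grade: "set_prod A (grade m) (grade n) \<subseteq> grade (m + n)"
  unfolding set_prod_def
  by (rule add_span_minimal[OF additive_subgroup_grade]) (auto intro: grade_mult)

lemma additive_subgroup_set_prod_grade: "additive_subgroup (set_prod A (grade m) (grade n)) A"
  unfolding set_prod_def by (rule A.additive_subgroup_add_span[OF grade_products_closed])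

lemma i_mult_set_prod_grade:
  assumes r: "r \<in> carrier R" and p: "p \<in> set_prod A (grade m) (grade n)"
  shows "i r \<otimes>\<^bsub>A\<^esub> p \<in> set_prod A (grade m) (grade n)"
  unfolding set_prod_def
proof (rule A.add_span_mult_left_closed[OF grade_products_closed grade_products_closed _ _
      p[unfolded set_prod_def]])
  fix y assume "y \<in> grade_products m n"
  then obtain a b where ab: "a \<in> grade m" "b \<in> grade n" "y = a \<otimes>\<^bsub>A\<^esub> b" by blast
  then have "i r \<otimes>\<^bsub>A\<^esub> y = (i r \<otimes>\<^bsub>A\<^esub> a) \<otimes>\<^bsub>A\<^esub> b"
    using r grade_closed[OF ab(1)] grade_closed[OF ab(2)] by (simp add: A.m_assoc)
  then have "i r \<otimes>\<^bsub>A\<^esub> y \<in> grade_products m n"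
    using grade_productsI[OF i_mult_grade[OF r ab(1)] ab(2)] by simp
  then show "i r \<otimes>\<^bsub>A\<^esub> y \<in> add_span A (grade_products m n)"
    by (rule add_span_incl[THEN subsetD])
qed (simp add: r)

lemma set_prod_grade_mult_i:
  assumes r: "r \<in> carrier R" and p: "p \<in> set_prod A (grade m) (grade n)"
  shows "p \<otimes>\<^bsub>A\<^esub> i r \<in> set_prod A (grade m) (grade n)"
  unfolding set_prod_def
proof (rule A.add_span_mult_right_closed[OF grade_products_closed grade_products_closed _ _
      p[unfolded set_prod_def]])
  fix y assume "y \<in> grade_products m n"
  then obtain a b where ab: "a \<in> grade m" "b \<in> grade n" "y = a \<otimes>\<^bsub>A\<^esub> b" by blast
  then have "y \<otimes>\<^bsub>A\<^esub> i r = a \<otimes>\<^bsub>A\<^esub> (b \<otimes>\<^bsub>A\<^esub> i r)"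
    using r grade_closed[OF ab(1)] grade_closed[OF ab(2)] by (simp add: A.m_assoc)
  moreover have "b \<otimes>\<^bsub>A\<^esub> i r \<in> grade n"
    using grade_mult[OF ab(2) i_mem_grade_zero[OF r]] by simp
  ultimately have "y \<otimes>\<^bsub>A\<^esub> i r \<in> grade_products m n"
    using grade_productsI[OF ab(1)] by simp
  then show "y \<otimes>\<^bsub>A\<^esub> i r \<in> add_span A (grade_products m n)"
    by (rule add_span_incl[THEN subsetD])
qed (simp add: r)

lemma unit_ideal_generator_in_grade_products:
  assumes "full_idempotent R e"
  obtains f where "f \<in> carrier R" "genideal R {f} = carrier R" "i f \<in> grade_products m (- m)"
proof (cases m rule: int_cases2)
  case (nonneg k)
  have "i \<one>\<^bsub>R\<^esub> = (tm [^]\<^bsub>A\<^esub> k \<otimes>\<^bsub>A\<^esub> i \<one>\<^bsub>R\<^esub>) \<otimes>\<^bsub>A\<^esub> (i \<one>\<^bsub>R\<^esub> \<otimes>\<^bsub>A\<^esub> tp [^]\<^bsub>A\<^esub> k)"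
    by (simp add: tm_pow_tp_pow A.m_assoc)
  moreover have "tm [^]\<^bsub>A\<^esub> k \<otimes>\<^bsub>A\<^esub> i \<one>\<^bsub>R\<^esub> \<in> grade m" "i \<one>\<^bsub>R\<^esub> \<otimes>\<^bsub>A\<^esub> tp [^]\<^bsub>A\<^esub> k \<in> grade (- m)"
    using tm_pow_i_mem_grade[OF R.one_closed, of k] i_tp_pow_mem_grade[OF R.one_closed, of k]
    by (simp_all only: nonneg minus_minus)
  ultimately have "i \<one>\<^bsub>R\<^esub> \<in> grade_products m (- m)"
    by blast
  then show ?thesis
    by (rule that[OF R.one_closed R.genideal_one])
next
  case (nonpos k)
  have "i ((\<alpha> ^^ k) \<one>\<^bsub>R\<^esub>) = (i \<one>\<^bsub>R\<^esub> \<otimes>\<^bsub>A\<^esub> tp [^]\<^bsub>A\<^esub> k) \<otimes>\<^bsub>A\<^esub> (tm [^]\<^bsub>A\<^esub> k \<otimes>\<^bsub>A\<^esub> i \<one>\<^bsub>R\<^esub>)"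
    by (simp add: tp_pow_tm_pow A.m_assoc)
  moreover have "i \<one>\<^bsub>R\<^esub> \<otimes>\<^bsub>A\<^esub> tp [^]\<^bsub>A\<^esub> k \<in> grade m" "tm [^]\<^bsub>A\<^esub> k \<otimes>\<^bsub>A\<^esub> i \<one>\<^bsub>R\<^esub> \<in> grade (- m)"
    using tm_pow_i_mem_grade[OF R.one_closed, of k] i_tp_pow_mem_grade[OF R.one_closed, of k]
    by (simp_all only: nonpos minus_minus)
  ultimately have "i ((\<alpha> ^^ k) \<one>\<^bsub>R\<^esub>) \<in> grade_products m (- m)"
    by blast
  then show ?thesis
    by (rule that[OF alpha_pow_closed[OF R.one_closed] genideal_alpha_pow_one[OF assms]])
qed

lemma one_mem_set_prod_opposite:
  assumes "full_idempotent R e"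
  shows "\<one>\<^bsub>A\<^esub> \<in> set_prod A (grade m) (grade (- m))"
proof -
  obtain f where f: "f \<in> carrier R" "genideal R {f} = carrier R" "i f \<in> grade_products m (- m)"
    using unit_ideal_generator_in_grade_products[OF assms] .
  have "i f \<in> set_prod A (grade m) (grade (- m))"
    unfolding set_prod_def using f(3) by (rule add_span_incl[THEN subsetD])
  then have "i \<one>\<^bsub>R\<^esub> \<in> set_prod A (grade m) (grade (- m))"
    by (intro R.unit_ideal_generator_image[where h = i, OF A.ring_axioms i.hom_closed i.hom_add i.hom_mult
          additive_subgroup_set_prod_grade i_mult_set_prod_grade set_prod_grade_mult_i f(1,2)])
  then show ?thesis
    by simp
qed

lemma grade_subset_set_prod:
  assumes "full_idempotent R e"
  shows "grade (m + n) \<subseteq> set_prod A (grade m) (grade n)"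
proof
  fix x assume x: "x \<in> grade (m + n)"
  have "\<one>\<^bsub>A\<^esub> \<otimes>\<^bsub>A\<^esub> x \<in> add_span A (grade_products m n)"
  proof (rule A.add_span_mult_right_closed[OF grade_products_closed grade_products_closed
        grade_closed[OF x] _ one_mem_set_prod_opposite[OF assms, unfolded set_prod_def]])
    fix y assume "y \<in> grade_products m (- m)"
    then obtain a b where "a \<in> grade m" "b \<in> grade (- m)" "y = a \<otimes>\<^bsub>A\<^esub> b" by blast
    moreover have "b \<otimes>\<^bsub>A\<^esub> x \<in> grade n"
      using grade_mult[OF \<open>b \<in> grade (- m)\<close> x] by simp
    moreover have "y \<otimes>\<^bsub>A\<^esub> x = a \<otimes>\<^bsub>A\<^esub> (b \<otimes>\<^bsub>A\<^esub> x)"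
      using calculation x grade_closed by (simp add: A.m_assoc)
    ultimately have "y \<otimes>\<^bsub>A\<^esub> x \<in> grade_products m n"
      using grade_productsI by simp
    then show "y \<otimes>\<^bsub>A\<^esub> x \<in> add_span A (grade_products m n)"
      by (rule add_span_incl[THEN subsetD])
  qed
  then show "x \<in> set_prod A (grade m) (grade n)"
    using grade_closed[OF x] by (simp add: set_prod_def)
qed

lemma strongly_graded_grade:
  assumes "full_idempotent R e"
  shows "strongly_graded A grade"
  unfolding strongly_graded_def
  using set_prod_subset_grade grade_subset_set_prod[OF assms] by blast

end

theorem mainTheorem7:
  fixes R :: "'a ring" and e :: 'a and \<alpha> :: "'a \<Rightarrow> 'a"
    and A :: "'b ring" and i :: "'a \<Rightarrow> 'b" and tp tm :: 'b
  assumes "ring R"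
    and "idempotent_elem R e"
    and "\<alpha> \<in> ring_iso R (corner R e)"
    and "is_corner_skew_Laurent R e \<alpha> A i tp tm"
    and "full_idempotent R e"
  shows "strongly_graded A (cs_grade R A i tp tm)"
proof -
  have rels: "corner_skew_rels R e \<alpha> A i tp tm"
    using assms(4) by (simp add: is_corner_skew_Laurent_def)
  interpret corner_skew_Laurent R A e \<alpha> i tp tm
    by (intro corner_skew_Laurent.intro corner_skew_Laurent_axioms.intro)
       (use assms(1-3) rels in \<open>simp_all add: corner_skew_rels_def\<close>)
  show ?thesis
    by (rule strongly_graded_grade[OF assms(5)])
qed

end
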